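(* Let $S\subset\mathbb{R}^n$ and $U_0\subset\mathbb{R}^{n\times n}$ be polyhedra and let $A_\star\in U_0$. If one-step safe learning is possible, then it is possible with at most $n$ measurements (i.e., with $m\le n$ in the definition below).
   Context: System: $x_{t+1}=A_\star x_t$ with $A_\star$ unknown, $A_\star\in U_0$. Given measurements $(x_j,y_j)$, $j=1,\dots,k$, with $y_j=A_\star x_j$, let $U_k=\{A\in U_0\mid Ax_j=y_j,\ j=1,\dots,k\}$. One-step safe learning is possible if for some nonnegative integer $m$ one can sequentially choose vectors $x_k\in S$, $k=1,\dots,m$ (each choice may depend on previous observations), observing $y_k=A_\star x_k$ after each choice, such that (1) for $k=1,\dots,m$, $Ax_k\in S$ for all $A\in U_{k-1}$, and (2) $U_m$ is a singleton. *)

theory Defs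
  imports "HOL-Analysis.Analysis"
begin

text \<open>Measurements are a list xs = [x_1, ..., x_m] (0-based in the list).
  U_k = set of matrices in U0 consistent with the first k measurements,
  where the observations are y_j = Astar x_j.\<close>

definition consistent_set ::
  "(real^'n^'n) set \<Rightarrow> real^'n^'n \<Rightarrow> (real^'n) list \<Rightarrow> nat \<Rightarrow> (real^'n^'n) set" where
  "consistent_set U0 Astar xs k =
     {A \<in> U0. \<forall>j<k. A *v (xs ! j) = Astar *v (xs ! j)}"

definition safe_learning_sequence ::
  "(real^'n) set \<Rightarrow> (real^'n^'n) set \<Rightarrow> real^'n^'n \<Rightarrow> (real^'n) list \<Rightarrow> bool" where
  "safe_learning_sequence S U0 Astar xs \<longleftrightarrow>
     (\<forall>k<length xs. xs ! k \<in> S \<and>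
        (\<forall>A \<in> consistent_set U0 Astar xs k. A *v (xs ! k) \<in> S)) \<and>
     is_singleton (consistent_set U0 Astar xs (length xs))"

definition one_step_safe_learning_possible ::
  "(real^'n) set \<Rightarrow> (real^'n^'n) set \<Rightarrow> real^'n^'n \<Rightarrow> bool" where
  "one_step_safe_learning_possible S U0 Astar \<longleftrightarrow>
     (\<exists>xs. safe_learning_sequence S U0 Astar xs)"

end

theory Submission
  imports Defs
begin

text \<open>A measurement lying in the span of the earlier ones carries no information: a matrix
  that agrees with \<open>Astar\<close> on the earlier measurements agrees with it on their span, so each
  \<open>U_k\<close> depends only on the span of \<open>x_1, \<dots>, x_k\<close>. Deleting such a measurement therefore leaves
  all the (reindexed) sets \<open>U_k\<close> unchanged, and with them the safety conditions and the final
  singleton. Deleting redundant measurements one at a time yields a safe learning sequence of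
  linearly independent vectors, which has at most \<open>n\<close> elements.\<close>

lemma matrix_vector_mult_eq_on_span_iff:
  fixes A B :: "real^'n^'m"
  shows "(\<forall>x\<in>span T. A *v x = B *v x) \<longleftrightarrow> (\<forall>x\<in>T. A *v x = B *v x)"
  using linear_eq_on_span[OF matrix_vector_mul_linear matrix_vector_mul_linear] span_superset
  by blast

lemma consistent_set_eq_span_take:
  assumes "k \<le> length xs"
  shows "consistent_set U0 Astar xs k =
           {A \<in> U0. \<forall>x\<in>span (set (take k xs)). A *v x = Astar *v x}"
proof -
  have "(\<forall>j<k. A *v xs ! j = Astar *v xs ! j) \<longleftrightarrow> (\<forall>x\<in>set (take k xs). A *v x = Astar *v x)"
    for A
    by (auto simp flip: nth_image[OF assms])
  then show ?thesis
    unfolding consistent_set_def matrix_vector_mult_eq_on_span_iff by blast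
qed

lemma set_take_Suc_remove_nth:
  assumes "k \<le> i" "i < length xs"
  shows "set (take (Suc i) xs) = insert (xs ! k) (set (take i (take k xs @ drop (Suc k) xs)))"
proof -
  have "take (Suc i) xs = take k xs @ xs ! k # take (i - k) (drop (Suc k) xs)"
    using assms by (metis Cons_nth_drop_Suc add_Suc_right le_add_diff_inverse le_less_trans take_Suc_Cons take_add)
  then show ?thesis using assms by (auto simp: min_def)
qed

lemma safe_learning_sequence_remove_nth:
  assumes safe: "safe_learning_sequence S U0 Astar xs"
    and k: "k < length xs" and redundant: "xs ! k \<in> span (set (take k xs))"
  shows "safe_learning_sequence S U0 Astar (take k xs @ drop (Suc k) xs)"
proof -
  define ys where "ys = take k xs @ drop (Suc k) xs"
  define idx where "idx i = (if i < k then i else Suc i)" for i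
  have length_ys: "length ys = length xs - 1"
    using k by (simp add: ys_def)
  have nth_ys: "ys ! i = xs ! idx i" if "i < length ys" for i
    using that k by (simp add: ys_def idx_def nth_append min_def)
  have span_take_ys: "span (set (take i ys)) = span (set (take (idx i) xs))"
    if "i \<le> length ys" for i
  proof (cases "i < k")
    case True
    then show ?thesis using k by (simp add: ys_def idx_def min_def)
  next
    case False
    have "span (set (take k xs)) \<subseteq> span (set (take i ys))"
      using False by (intro span_mono) (simp add: ys_def set_take_subset_set_take)
    then have "xs ! k \<in> span (set (take i ys))"
      using redundant by blast
    moreover have "set (take (Suc i) xs) = insert (xs ! k) (set (take i ys))"
      using False that length_ys k unfolding ys_def by (intro set_take_Suc_remove_nth) auto
    ultimately show ?thesis
      using False by (simp add: idx_def span_redundant)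
  qed
  have consistent_ys: "consistent_set U0 Astar ys i = consistent_set U0 Astar xs (idx i)"
    if "i \<le> length ys" for i
    using that k length_ys span_take_ys[OF that]
    by (simp add: consistent_set_eq_span_take idx_def)
  have "idx (length ys) = length xs"
    using k length_ys by (auto simp: idx_def)
  moreover have "idx i < length xs" if "i < length ys" for i
    using that length_ys by (auto simp: idx_def)
  ultimately show ?thesis
    using safe nth_ys consistent_ys
    unfolding ys_def[symmetric] safe_learning_sequence_def by (metis less_imp_le order.refl)
qed

lemma safe_learning_sequence_obtain_nonredundant:
  assumes "safe_learning_sequence S U0 Astar xs"
  obtains ys where "safe_learning_sequence S U0 Astar ys"
    and "\<forall>k<length ys. ys ! k \<notin> span (set (take k ys))"
  using assms
proof (induction "length xs" arbitrary: xs rule: less_induct)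
  case less
  show ?case
  proof (cases "\<exists>k<length xs. xs ! k \<in> span (set (take k xs))")
    case True
    then obtain k where k: "k < length xs" and redundant: "xs ! k \<in> span (set (take k xs))"
      by blast
    have "safe_learning_sequence S U0 Astar (take k xs @ drop (Suc k) xs)"
      using less.prems(2) k redundant by (rule safe_learning_sequence_remove_nth)
    moreover have "length (take k xs @ drop (Suc k) xs) < length xs"
      using k by simp
    ultimately show ?thesis
      using less.hyps less.prems(1) by blast
  next
    case False
    with less.prems show ?thesis by blast
  qed
qed

lemma length_le_DIM_if_nonredundant:
  fixes xs :: "'a::euclidean_space list"
  assumes "\<forall>k<length xs. xs ! k \<notin> span (set (take k xs))"
  shows "length xs \<le> DIM('a)"
proof -
  have "dim (set (take k xs)) = k" if "k \<le> length xs" for k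
    using that
  proof (induction k)
    case (Suc k)
    then have "set (take (Suc k) xs) = insert (xs ! k) (set (take k xs))"
      by (simp add: take_Suc_conv_app_nth)
    with Suc assms show ?case
      by (simp add: dim_insert)
  qed simp
  from this[of "length xs"] show ?thesis
    using dim_subset_UNIV[of "set xs"] by simp
qed

theorem corollary8:
  fixes S :: "(real^'n) set" and U0 :: "(real^'n^'n) set" and Astar :: "real^'n^'n"
  assumes "polyhedron S" and "polyhedron U0" and "Astar \<in> U0"
    and "one_step_safe_learning_possible S U0 Astar"
  shows "\<exists>xs. length xs \<le> CARD('n) \<and> safe_learning_sequence S U0 Astar xs"
proof -
  obtain xs where "safe_learning_sequence S U0 Astar xs"
    using assms(4) unfolding one_step_safe_learning_possible_def by blast
  then obtain ys where "safe_learning_sequence S U0 Astar ys"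
    and "\<forall>k<length ys. ys ! k \<notin> span (set (take k ys))"
    by (rule safe_learning_sequence_obtain_nonredundant)
  then show ?thesis
    using length_le_DIM_if_nonredundant[of ys] by auto
qed

end
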